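(* Let $\Theta$ be a finite set of states, $\pi$ a probability distribution on $\Theta$ (Alice's prior), $\Gamma\subset\Theta$ with $0<\pi(\Gamma)<1$, and $\widetilde\pi$ another probability distribution on $\Theta$ (Carroll's prior). Then Carroll is $\Gamma$-optimistic if and only if $\widetilde\pi$ is a $\Gamma$-strengthening of $\pi$.
   Context: A signaling structure on $\Theta$ is a finite set $S$ of signals with probabilities $\sigma(s\mid\theta)\ge0$, $\sum_{s\in S}\sigma(s\mid\theta)=1$ for each $\theta$. For a prior $\rho$ on $\Theta$, $\mathbb{P}_{\rho,\sigma}$ is the probability on $\Theta\times S$ given by $\mathbb{P}_{\rho,\sigma}(\theta,s)=\rho(\theta)\sigma(s\mid\theta)$. Write $\mathbb{P}=\mathbb{P}_{\pi,\sigma}$ and $\widetilde{\mathbb{P}}=\mathbb{P}_{\widetilde\pi,\sigma}$. Alice's posterior of $\Gamma$ is $Q_\Gamma(s)=\mathbb{P}(\Gamma\mid s)$ (for $\mathbb{P}(s)>0$). $(Q_\Gamma,\widetilde{\mathbb{P}})$ denotes the random variable taking value $Q_\Gamma(s)$ with probability $\widetilde{\mathbb{P}}(s)$, and $(Q_\Gamma,\mathbb{P})$ the one taking value $Q_\Gamma(s)$ with probability $\mathbb{P}(s)$. $X\ge_{\mathrm{lr}}Y$ (likelihood ratio order) means $\mathbb{P}(X=v)/\mathbb{P}(Y=v)$ is weakly increasing in $v$ (equivalently $\mathbb{P}(X=u)\mathbb{P}(Y=v)\le\mathbb{P}(X=v)\mathbb{P}(Y=u)$ for $u<v$). Carroll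 is $\Gamma$-optimistic if $(Q_\Gamma,\widetilde{\mathbb{P}})\ge_{\mathrm{lr}}(Q_\Gamma,\mathbb{P})$ for every signaling structure $(S,\sigma)$ on $\Theta$. $\widetilde\pi$ is a $\Gamma$-strengthening of $\pi$ if $\widetilde\pi=a\pi^\Gamma+(1-a)\pi$ for some $a\in[0,1]$, where $\pi^\Gamma(\theta)=\pi(\theta\mid\Gamma)$. *)

theory Defs
  imports Complex_Main
begin

text \<open>States: a finite type 'a (Theta = UNIV). Signals: a finite set S of natural numbers
  (every finite signal set is in bijection with such a set).\<close>

definition prob_dist :: "('a::finite \<Rightarrow> real) \<Rightarrow> bool" where
  "prob_dist \<rho> \<longleftrightarrow> (\<forall>\<theta>. 0 \<le> \<rho> \<theta>) \<and> (\<Sum>\<theta>\<in>UNIV. \<rho> \<theta>) = 1"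

definition signaling :: "nat set \<Rightarrow> (nat \<Rightarrow> 'a::finite \<Rightarrow> real) \<Rightarrow> bool" where
  "signaling S \<sigma> \<longleftrightarrow> finite S \<and> (\<forall>s\<in>S. \<forall>\<theta>. 0 \<le> \<sigma> s \<theta>)
     \<and> (\<forall>\<theta>. (\<Sum>s\<in>S. \<sigma> s \<theta>) = 1)"

definition sig_prob :: "('a::finite \<Rightarrow> real) \<Rightarrow> (nat \<Rightarrow> 'a \<Rightarrow> real) \<Rightarrow> nat \<Rightarrow> real" where
  "sig_prob \<rho> \<sigma> s = (\<Sum>\<theta>\<in>UNIV. \<rho> \<theta> * \<sigma> s \<theta>)"

text \<open>Alice's posterior of Gamma given s: P(Gamma | s) (meaningful when P(s) > 0).\<close>
definition posterior :: "('a::finite \<Rightarrow> real) \<Rightarrow> (nat \<Rightarrow> 'a \<Rightarrow> real) \<Rightarrow> 'a set \<Rightarrow> nat \<Rightarrow> real" where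
  "posterior \<pi> \<sigma> \<Gamma> s = (\<Sum>\<theta>\<in>\<Gamma>. \<pi> \<theta> * \<sigma> s \<theta>) / sig_prob \<pi> \<sigma> s"

text \<open>Probability that the random variable (Q_Gamma, P_{rho,sigma}) takes value v; Q_Gamma is
  defined on the signals with P_{pi,sigma}(s) > 0.\<close>
definition post_mass ::
  "('a::finite \<Rightarrow> real) \<Rightarrow> ('a \<Rightarrow> real) \<Rightarrow> nat set \<Rightarrow> (nat \<Rightarrow> 'a \<Rightarrow> real) \<Rightarrow> 'a set \<Rightarrow> real \<Rightarrow> real" where
  "post_mass \<pi> \<rho> S \<sigma> \<Gamma> v =
     (\<Sum>s\<in>{s\<in>S. 0 < sig_prob \<pi> \<sigma> s \<and> posterior \<pi> \<sigma> \<Gamma> s = v}. sig_prob \<rho> \<sigma> s)"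

text \<open>Likelihood ratio order X \<ge>lr Y for real random variables given by mass functions,
  in the cross-product form: P(X=u)P(Y=v) \<le> P(X=v)P(Y=u) for u < v.\<close>
definition lr_ge :: "(real \<Rightarrow> real) \<Rightarrow> (real \<Rightarrow> real) \<Rightarrow> bool" where
  "lr_ge pX pY \<longleftrightarrow> (\<forall>u v. u < v \<longrightarrow> pX u * pY v \<le> pX v * pY u)"

text \<open>Carroll (prior pit) is Gamma-optimistic relative to Alice (prior pi): for every signaling
  structure, the random variable (Q_Gamma, Ptilde) is well defined (every signal with positive
  Ptilde-probability has positive P-probability, so Q_Gamma is defined there) and
  (Q_Gamma, Ptilde) \<ge>lr (Q_Gamma, P).\<close>
definition optimistic :: "('a::finite \<Rightarrow> real) \<Rightarrow> ('a \<Rightarrow> real) \<Rightarrow> 'a set \<Rightarrow> bool" where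
  "optimistic \<pi> \<pi>t \<Gamma> \<longleftrightarrow>
     (\<forall>S \<sigma>. signaling S \<sigma> \<longrightarrow>
        (\<forall>s\<in>S. 0 < sig_prob \<pi>t \<sigma> s \<longrightarrow> 0 < sig_prob \<pi> \<sigma> s) \<and>
        lr_ge (post_mass \<pi> \<pi>t S \<sigma> \<Gamma>) (post_mass \<pi> \<pi> S \<sigma> \<Gamma>))"

definition cond_prior :: "('a::finite \<Rightarrow> real) \<Rightarrow> 'a set \<Rightarrow> 'a \<Rightarrow> real" where
  "cond_prior \<pi> \<Gamma> \<theta> = (if \<theta> \<in> \<Gamma> then \<pi> \<theta> / (\<Sum>x\<in>\<Gamma>. \<pi> x) else 0)"

definition strengthening :: "('a::finite \<Rightarrow> real) \<Rightarrow> ('a \<Rightarrow> real) \<Rightarrow> 'a set \<Rightarrow> bool" where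
  "strengthening \<pi> \<pi>t \<Gamma> \<longleftrightarrow>
     (\<exists>a::real. 0 \<le> a \<and> a \<le> 1 \<and> (\<forall>\<theta>. \<pi>t \<theta> = a * cond_prior \<pi> \<Gamma> \<theta> + (1 - a) * \<pi> \<theta>))"

end

theory Submission
  imports Defs
begin

(*
  A \<Gamma>-strengthening rescales \<pi> by a constant c1 on \<Gamma> and by a constant c0 \<le> c1 off \<Gamma>.
  Then Carroll's probability of a signal s is Alice's times c0 + (c1 - c0) Q_\<Gamma>(s), so the
  likelihood ratio of (Q_\<Gamma>, P~) to (Q_\<Gamma>, P) is an increasing function of the posterior.

  Conversely, a binary signal sent with probability h(\<theta>) is good news for \<Gamma> exactly when
  \<pi>(\<Gamma>) E_\<pi> h < E_\<pi>[h; \<Gamma>], and optimism then forces E_\<pi> h \<le> E_\<pi>~ h. Both conditions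
  are invariant under positive affine maps of h, so this holds for every real f, and by
  perturbing f on \<Gamma> also when \<pi>(\<Gamma>) E_\<pi> f \<le> E_\<pi>[f; \<Gamma>]. Applied to f and -f on the
  hyperplane \<pi>(\<Gamma>) E_\<pi> f = E_\<pi>[f; \<Gamma>] it gives E_\<pi>~ f = E_\<pi> f, and two test functions
  per state in this hyperplane show that \<pi>~/\<pi> is constant on \<Gamma> and on its complement.
*)

lemma prob_dist_nonneg: "prob_dist \<rho> \<Longrightarrow> 0 \<le> \<rho> \<theta>"
  by (simp add: prob_dist_def)

lemma prob_dist_sum_le_1:
  assumes "prob_dist (\<rho> :: 'a::finite \<Rightarrow> real)"
  shows "(\<Sum>\<theta>\<in>A. \<rho> \<theta>) \<le> 1"
proof -
  have "(\<Sum>\<theta>\<in>A. \<rho> \<theta>) \<le> (\<Sum>\<theta>\<in>UNIV. \<rho> \<theta>)"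
    by (rule sum_mono2) (auto intro: prob_dist_nonneg[OF assms])
  then show ?thesis using assms by (simp add: prob_dist_def)
qed

lemma prob_dist_le_1: "prob_dist \<rho> \<Longrightarrow> \<rho> \<theta> \<le> 1"
  using prob_dist_sum_le_1[of \<rho> "{\<theta>}"] by simp

lemma prob_dist_expectation_le_sum_abs:
  assumes "prob_dist \<rho>"
  shows "(\<Sum>\<theta>\<in>UNIV. \<rho> \<theta> * f \<theta>) \<le> (\<Sum>\<theta>\<in>UNIV. \<bar>f \<theta>\<bar>)"
proof (rule sum_mono)
  fix \<theta>
  have "\<rho> \<theta> * f \<theta> \<le> \<rho> \<theta> * \<bar>f \<theta>\<bar>"
    using prob_dist_nonneg[OF assms] by (simp add: mult_left_mono)
  also have "\<dots> \<le> \<bar>f \<theta>\<bar>"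
    using prob_dist_nonneg[OF assms] prob_dist_le_1[OF assms] by (simp add: mult_left_le_one_le)
  finally show "\<rho> \<theta> * f \<theta> \<le> \<bar>f \<theta>\<bar>" .
qed

lemma sum_mult_affine:
  "(\<Sum>\<theta>\<in>A. \<rho> \<theta> * (c * f \<theta> + d)) = c * (\<Sum>\<theta>\<in>A. \<rho> \<theta> * f \<theta>) + d * (\<Sum>\<theta>\<in>A. \<rho> \<theta>)"
  for \<rho> f :: "'a \<Rightarrow> real"
  by (simp add: algebra_simps sum.distrib sum_distrib_left)

lemma sum_mult_indicator:
  fixes \<rho> :: "'a \<Rightarrow> real"
  assumes "finite A"
  shows "(\<Sum>\<theta>\<in>A. \<rho> \<theta> * (if \<theta> \<in> B then c else 0)) = c * (\<Sum>\<theta>\<in>A \<inter> B. \<rho> \<theta>)"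
proof -
  have "(\<Sum>\<theta>\<in>A. \<rho> \<theta> * (if \<theta> \<in> B then c else 0)) = (\<Sum>\<theta>\<in>A. if \<theta> \<in> B then c * \<rho> \<theta> else 0)"
    by (rule sum.cong) auto
  also have "\<dots> = (\<Sum>\<theta>\<in>A \<inter> B. c * \<rho> \<theta>)"
    using assms by (simp add: sum.inter_restrict)
  finally show ?thesis
    by (simp add: sum_distrib_left)
qed

lemma lr_ge_increasing_weight:
  assumes "mono w" and "\<And>v. 0 \<le> p v"
  shows "lr_ge (\<lambda>v. w v * p v) p"
  unfolding lr_ge_def
proof (intro allI impI)
  fix u v :: real
  assume "u < v"
  then have "w u * (p u * p v) \<le> w v * (p u * p v)"
    using assms by (intro mult_right_mono) (auto simp: mono_def)
  then show "w u * p u * p v \<le> w v * p v * p u"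
    by (simp add: algebra_simps)
qed

lemma sig_prob_two_level:
  assumes "\<And>\<theta>. \<pi>t \<theta> = (if \<theta> \<in> \<Gamma> then c1 else c0) * \<pi> \<theta>"
  shows "sig_prob \<pi>t \<sigma> s = c0 * sig_prob \<pi> \<sigma> s + (c1 - c0) * (\<Sum>\<theta>\<in>\<Gamma>. \<pi> \<theta> * \<sigma> s \<theta>)"
proof -
  have "\<pi>t \<theta> * \<sigma> s \<theta> = c0 * (\<pi> \<theta> * \<sigma> s \<theta>) + (c1 - c0) * (if \<theta> \<in> \<Gamma> then \<pi> \<theta> * \<sigma> s \<theta> else 0)"
    for \<theta> by (simp add: assms algebra_simps)
  then have "sig_prob \<pi>t \<sigma> s
      = c0 * sig_prob \<pi> \<sigma> s + (c1 - c0) * (\<Sum>\<theta>\<in>UNIV. if \<theta> \<in> \<Gamma> then \<pi> \<theta> * \<sigma> s \<theta> else 0)"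
    by (simp add: sig_prob_def sum.distrib sum_distrib_left)
  then show ?thesis
    by (simp add: sum.inter_restrict [symmetric])
qed

lemma post_mass_two_level:
  assumes "\<And>\<theta>. \<pi>t \<theta> = (if \<theta> \<in> \<Gamma> then c1 else c0) * \<pi> \<theta>"
  shows "post_mass \<pi> \<pi>t S \<sigma> \<Gamma> v = (c0 + (c1 - c0) * v) * post_mass \<pi> \<pi> S \<sigma> \<Gamma> v"
  unfolding post_mass_def sum_distrib_left
proof (rule sum.cong)
  fix s
  assume "s \<in> {s \<in> S. 0 < sig_prob \<pi> \<sigma> s \<and> posterior \<pi> \<sigma> \<Gamma> s = v}"
  then have "(\<Sum>\<theta>\<in>\<Gamma>. \<pi> \<theta> * \<sigma> s \<theta>) = v * sig_prob \<pi> \<sigma> s"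
    by (auto simp: posterior_def)
  then show "sig_prob \<pi>t \<sigma> s = (c0 + (c1 - c0) * v) * sig_prob \<pi> \<sigma> s"
    by (simp add: sig_prob_two_level[OF assms] algebra_simps)
qed simp

lemma two_level_imp_optimistic:
  assumes "prob_dist \<pi>" and "c0 \<le> c1"
    and two_level: "\<And>\<theta>. \<pi>t \<theta> = (if \<theta> \<in> \<Gamma> then c1 else c0) * \<pi> \<theta>"
  shows "optimistic \<pi> \<pi>t \<Gamma>"
  unfolding optimistic_def
proof (intro allI impI conjI ballI)
  fix S and \<sigma> :: "nat \<Rightarrow> 'a \<Rightarrow> real"
  assume sig: "signaling S \<sigma>"
  show "0 < sig_prob \<pi> \<sigma> s" if "s \<in> S" and pos: "0 < sig_prob \<pi>t \<sigma> s" for s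
  proof (rule ccontr)
    assume "\<not> 0 < sig_prob \<pi> \<sigma> s"
    have nonneg: "0 \<le> \<pi> \<theta> * \<sigma> s \<theta>" for \<theta>
      using sig \<open>s \<in> S\<close> prob_dist_nonneg[OF assms(1)] by (simp add: signaling_def)
    then have "0 \<le> sig_prob \<pi> \<sigma> s"
      unfolding sig_prob_def by (simp add: sum_nonneg)
    with \<open>\<not> 0 < sig_prob \<pi> \<sigma> s\<close> have "sig_prob \<pi> \<sigma> s = 0"
      by simp
    then have "\<forall>\<theta>\<in>UNIV. \<pi> \<theta> * \<sigma> s \<theta> = 0"
      using nonneg by (simp add: sig_prob_def sum_nonneg_eq_0_iff del: mult_eq_0_iff)
    then have "(\<Sum>\<theta>\<in>\<Gamma>. \<pi> \<theta> * \<sigma> s \<theta>) = 0"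
      by (simp del: mult_eq_0_iff)
    then show False
      using pos \<open>sig_prob \<pi> \<sigma> s = 0\<close> by (simp add: sig_prob_two_level[OF two_level])
  qed
  have "mono (\<lambda>v. c0 + (c1 - c0) * v)"
    using \<open>c0 \<le> c1\<close> by (intro monoI) (simp add: mult_left_mono)
  moreover have "0 \<le> post_mass \<pi> \<pi> S \<sigma> \<Gamma> v" for v
    unfolding post_mass_def by (rule sum_nonneg) auto
  ultimately show "lr_ge (post_mass \<pi> \<pi>t S \<sigma> \<Gamma>) (post_mass \<pi> \<pi> S \<sigma> \<Gamma>)"
    unfolding post_mass_two_level[OF two_level, abs_def] by (rule lr_ge_increasing_weight)
qed

lemma strengthening_imp_two_level:
  assumes "strengthening \<pi> \<pi>t \<Gamma>" and "0 < (\<Sum>\<theta>\<in>\<Gamma>. \<pi> \<theta>)"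
  obtains c0 c1 where "c0 \<le> c1" and "\<And>\<theta>. \<pi>t \<theta> = (if \<theta> \<in> \<Gamma> then c1 else c0) * \<pi> \<theta>"
proof -
  obtain a where "0 \<le> a" and "\<And>\<theta>. \<pi>t \<theta> = a * cond_prior \<pi> \<Gamma> \<theta> + (1 - a) * \<pi> \<theta>"
    using assms(1) by (auto simp: strengthening_def)
  then have "\<pi>t \<theta> = (if \<theta> \<in> \<Gamma> then a / (\<Sum>x\<in>\<Gamma>. \<pi> x) + (1 - a) else 1 - a) * \<pi> \<theta>" for \<theta>
    by (simp add: cond_prior_def algebra_simps)
  moreover have "1 - a \<le> a / (\<Sum>x\<in>\<Gamma>. \<pi> x) + (1 - a)"
    using \<open>0 \<le> a\<close> assms(2) by simp
  ultimately show ?thesis using that by blast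
qed

lemma two_level_imp_strengthening:
  fixes \<pi> \<pi>t :: "'a::finite \<Rightarrow> real"
  assumes "prob_dist \<pi>" and "prob_dist \<pi>t" and "0 < (\<Sum>\<theta>\<in>\<Gamma>. \<pi> \<theta>)"
    and "0 \<le> c0" and "c0 \<le> c1"
    and two_level: "\<And>\<theta>. \<pi>t \<theta> = (if \<theta> \<in> \<Gamma> then c1 else c0) * \<pi> \<theta>"
  shows "strengthening \<pi> \<pi>t \<Gamma>"
proof -
  define g where "g = (\<Sum>\<theta>\<in>\<Gamma>. \<pi> \<theta>)"
  have "\<pi>t \<theta> = c0 * \<pi> \<theta> + \<pi> \<theta> * (if \<theta> \<in> \<Gamma> then c1 - c0 else 0)" for \<theta>
    by (simp add: two_level algebra_simps)
  then have "(\<Sum>\<theta>\<in>UNIV. \<pi>t \<theta>) = c0 * (\<Sum>\<theta>\<in>UNIV. \<pi> \<theta>) + (c1 - c0) * g"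
    by (simp add: sum.distrib sum_distrib_left sum_mult_indicator g_def)
  then have total: "c0 + (c1 - c0) * g = 1"
    using assms(1,2) by (simp add: prob_dist_def)
  show ?thesis
    unfolding strengthening_def
  proof (intro exI[of _ "1 - c0"] conjI allI)
    show "0 \<le> 1 - c0"
      using total mult_nonneg_nonneg[of "c1 - c0" g] \<open>c0 \<le> c1\<close> assms(3)
      unfolding g_def by linarith
    show "1 - c0 \<le> 1"
      using \<open>0 \<le> c0\<close> by simp
    have "(1 - c0) / g = c1 - c0"
      using total assms(3) by (simp add: g_def field_simps)
    then have scaled: "(1 - c0) * cond_prior \<pi> \<Gamma> \<theta> = (if \<theta> \<in> \<Gamma> then c1 - c0 else 0) * \<pi> \<theta>"
      for \<theta> by (simp add: cond_prior_def g_def flip: times_divide_eq_left)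
    show "\<pi>t \<theta> = (1 - c0) * cond_prior \<pi> \<Gamma> \<theta> + (1 - (1 - c0)) * \<pi> \<theta>" for \<theta>
      unfolding scaled two_level by (simp add: algebra_simps)
  qed
qed

context
  fixes \<pi> \<pi>t :: "'a::finite \<Rightarrow> real" and \<Gamma> :: "'a set"
  assumes opt: "optimistic \<pi> \<pi>t \<Gamma>" and \<pi>_dist: "prob_dist \<pi>" and \<pi>t_dist: "prob_dist \<pi>t"
begin

lemma optimistic_two_signals:
  assumes sig: "signaling {0, 1} \<sigma>"
    and pos: "0 < sig_prob \<pi> \<sigma> 0" "0 < sig_prob \<pi> \<sigma> 1"
    and post_less: "posterior \<pi> \<sigma> \<Gamma> 1 < posterior \<pi> \<sigma> \<Gamma> 0"
  shows "sig_prob \<pi>t \<sigma> 1 * sig_prob \<pi> \<sigma> 0 \<le> sig_prob \<pi>t \<sigma> 0 * sig_prob \<pi> \<sigma> 1"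
proof -
  have level_0: "{s \<in> {0, 1}. 0 < sig_prob \<pi> \<sigma> s \<and> posterior \<pi> \<sigma> \<Gamma> s = posterior \<pi> \<sigma> \<Gamma> 0} = {0}"
    and level_1: "{s \<in> {0, 1}. 0 < sig_prob \<pi> \<sigma> s \<and> posterior \<pi> \<sigma> \<Gamma> s = posterior \<pi> \<sigma> \<Gamma> 1} = {1}"
    using pos post_less by auto
  have "lr_ge (post_mass \<pi> \<pi>t {0, 1} \<sigma> \<Gamma>) (post_mass \<pi> \<pi> {0, 1} \<sigma> \<Gamma>)"
    using opt sig by (simp add: optimistic_def)
  then have "post_mass \<pi> \<pi>t {0, 1} \<sigma> \<Gamma> (posterior \<pi> \<sigma> \<Gamma> 1) * post_mass \<pi> \<pi> {0, 1} \<sigma> \<Gamma> (posterior \<pi> \<sigma> \<Gamma> 0)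
      \<le> post_mass \<pi> \<pi>t {0, 1} \<sigma> \<Gamma> (posterior \<pi> \<sigma> \<Gamma> 0) * post_mass \<pi> \<pi> {0, 1} \<sigma> \<Gamma> (posterior \<pi> \<sigma> \<Gamma> 1)"
    using post_less by (simp add: lr_ge_def)
  then show ?thesis
    unfolding post_mass_def level_0 level_1 by simp
qed

lemma optimistic_binary_signal_test:
  assumes h: "\<And>\<theta>. 0 \<le> h \<theta>" "\<And>\<theta>. h \<theta> \<le> 1"
    and below_1: "(\<Sum>\<theta>\<in>UNIV. \<pi> \<theta> * h \<theta>) < 1"
    and good_news: "(\<Sum>\<theta>\<in>\<Gamma>. \<pi> \<theta>) * (\<Sum>\<theta>\<in>UNIV. \<pi> \<theta> * h \<theta>) < (\<Sum>\<theta>\<in>\<Gamma>. \<pi> \<theta> * h \<theta>)"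
  shows "(\<Sum>\<theta>\<in>UNIV. \<pi> \<theta> * h \<theta>) \<le> (\<Sum>\<theta>\<in>UNIV. \<pi>t \<theta> * h \<theta>)"
proof -
  define \<sigma> where "\<sigma> = (\<lambda>s \<theta>. if s = (0::nat) then h \<theta> else 1 - h \<theta>)"
  define g where "g = (\<Sum>\<theta>\<in>\<Gamma>. \<pi> \<theta>)"
  define A where "A = (\<Sum>\<theta>\<in>\<Gamma>. \<pi> \<theta> * h \<theta>)"
  define F where "F = (\<Sum>\<theta>\<in>UNIV. \<pi> \<theta> * h \<theta>)"
  define Ft where "Ft = (\<Sum>\<theta>\<in>UNIV. \<pi>t \<theta> * h \<theta>)"
  have prob_0: "sig_prob \<rho> \<sigma> 0 = (\<Sum>\<theta>\<in>UNIV. \<rho> \<theta> * h \<theta>)" for \<rho>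
    by (simp add: sig_prob_def \<sigma>_def)
  have prob_1: "sig_prob \<rho> \<sigma> 1 = 1 - (\<Sum>\<theta>\<in>UNIV. \<rho> \<theta> * h \<theta>)" if "prob_dist \<rho>" for \<rho>
    using that by (simp add: sig_prob_def \<sigma>_def prob_dist_def algebra_simps sum_subtractf)
  have "0 \<le> g"
    unfolding g_def by (simp add: prob_dist_nonneg[OF \<pi>_dist] sum_nonneg)
  moreover have "A \<le> F"
    unfolding A_def F_def
    by (rule sum_mono2) (auto simp: h prob_dist_nonneg[OF \<pi>_dist])
  moreover have "0 \<le> F"
    unfolding F_def by (simp add: h prob_dist_nonneg[OF \<pi>_dist] sum_nonneg)
  ultimately have "0 < F"
    using good_news mult_nonneg_nonneg[of g F] unfolding A_def F_def g_def by linarith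
  have "F < 1"
    using below_1 by (simp add: F_def)
  have "posterior \<pi> \<sigma> \<Gamma> 0 = A / F"
    unfolding posterior_def prob_0 by (simp add: A_def F_def \<sigma>_def)
  moreover have "posterior \<pi> \<sigma> \<Gamma> 1 = (g - A) / (1 - F)"
    unfolding posterior_def prob_1[OF \<pi>_dist]
    by (simp add: A_def F_def g_def \<sigma>_def algebra_simps sum_subtractf)
  moreover have "(g - A) / (1 - F) < A / F"
    using good_news \<open>0 < F\<close> \<open>F < 1\<close>
    by (simp add: A_def F_def g_def divide_simps algebra_simps)
  moreover have "signaling {0, 1} \<sigma>"
    using h by (auto simp: signaling_def \<sigma>_def)
  moreover have "0 < sig_prob \<pi> \<sigma> 0" and "0 < sig_prob \<pi> \<sigma> 1"
    unfolding prob_0 prob_1[OF \<pi>_dist] using \<open>0 < F\<close> \<open>F < 1\<close> by (simp_all add: F_def)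
  ultimately have "sig_prob \<pi>t \<sigma> 1 * sig_prob \<pi> \<sigma> 0 \<le> sig_prob \<pi>t \<sigma> 0 * sig_prob \<pi> \<sigma> 1"
    by (intro optimistic_two_signals) simp_all
  then have "(1 - Ft) * F \<le> Ft * (1 - F)"
    unfolding prob_0 prob_1[OF \<pi>_dist] prob_1[OF \<pi>t_dist] F_def Ft_def .
  then show ?thesis
    by (simp add: F_def Ft_def algebra_simps)
qed

lemma optimistic_expectation_mono_strict:
  assumes good_news: "(\<Sum>\<theta>\<in>\<Gamma>. \<pi> \<theta>) * (\<Sum>\<theta>\<in>UNIV. \<pi> \<theta> * f \<theta>) < (\<Sum>\<theta>\<in>\<Gamma>. \<pi> \<theta> * f \<theta>)"
  shows "(\<Sum>\<theta>\<in>UNIV. \<pi> \<theta> * f \<theta>) \<le> (\<Sum>\<theta>\<in>UNIV. \<pi>t \<theta> * f \<theta>)"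
proof -
  define N where "N = (\<Sum>\<theta>\<in>UNIV. \<bar>f \<theta>\<bar>) + 1"
  define h where "h = (\<lambda>\<theta>. (1 / (2 * N)) * f \<theta> + 1 / 2)"
  have f_less_N: "\<bar>f \<theta>\<bar> < N" for \<theta>
    using member_le_sum[of \<theta> UNIV "\<lambda>\<theta>. \<bar>f \<theta>\<bar>"] by (simp add: N_def)
  then have "0 < N"
    by (meson abs_ge_zero le_less_trans)
  have h_sum: "(\<Sum>\<theta>\<in>A. \<rho> \<theta> * h \<theta>) = (\<Sum>\<theta>\<in>A. \<rho> \<theta> * f \<theta>) / (2 * N) + (\<Sum>\<theta>\<in>A. \<rho> \<theta>) / 2"
    for A and \<rho> :: "'a \<Rightarrow> real"
    unfolding h_def sum_mult_affine by simp
  have "0 \<le> h \<theta>" "h \<theta> \<le> 1" for \<theta>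
    using f_less_N[of \<theta>] \<open>0 < N\<close> by (auto simp: h_def field_simps abs_less_iff)
  moreover have "(\<Sum>\<theta>\<in>UNIV. \<pi> \<theta> * f \<theta>) < N"
    using prob_dist_expectation_le_sum_abs[OF \<pi>_dist, of f] by (simp add: N_def)
  then have "(\<Sum>\<theta>\<in>UNIV. \<pi> \<theta> * h \<theta>) < 1"
    using \<pi>_dist \<open>0 < N\<close> by (simp add: h_sum prob_dist_def field_simps)
  moreover have "(\<Sum>\<theta>\<in>\<Gamma>. \<pi> \<theta>) * (\<Sum>\<theta>\<in>UNIV. \<pi> \<theta> * h \<theta>) < (\<Sum>\<theta>\<in>\<Gamma>. \<pi> \<theta> * h \<theta>)"
    using good_news \<pi>_dist \<open>0 < N\<close> by (simp add: h_sum prob_dist_def field_simps)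
  ultimately have "(\<Sum>\<theta>\<in>UNIV. \<pi> \<theta> * h \<theta>) \<le> (\<Sum>\<theta>\<in>UNIV. \<pi>t \<theta> * h \<theta>)"
    using optimistic_binary_signal_test by blast
  then show ?thesis
    using \<pi>_dist \<pi>t_dist \<open>0 < N\<close> by (simp add: h_sum prob_dist_def divide_le_cancel)
qed

context
  assumes prob_\<Gamma>_pos: "0 < (\<Sum>\<theta>\<in>\<Gamma>. \<pi> \<theta>)" and prob_\<Gamma>_less_1: "(\<Sum>\<theta>\<in>\<Gamma>. \<pi> \<theta>) < 1"
begin

lemma optimistic_expectation_mono:
  assumes no_bad_news: "(\<Sum>\<theta>\<in>\<Gamma>. \<pi> \<theta>) * (\<Sum>\<theta>\<in>UNIV. \<pi> \<theta> * f \<theta>) \<le> (\<Sum>\<theta>\<in>\<Gamma>. \<pi> \<theta> * f \<theta>)"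
  shows "(\<Sum>\<theta>\<in>UNIV. \<pi> \<theta> * f \<theta>) \<le> (\<Sum>\<theta>\<in>UNIV. \<pi>t \<theta> * f \<theta>)"
proof (rule field_le_epsilon)
  fix e :: real
  assume "0 < e"
  define g where "g = (\<Sum>\<theta>\<in>\<Gamma>. \<pi> \<theta>)"
  define f' where "f' = (\<lambda>\<theta>. f \<theta> + (if \<theta> \<in> \<Gamma> then e else 0))"
  have f'_sum: "(\<Sum>\<theta>\<in>A. \<rho> \<theta> * f' \<theta>) = (\<Sum>\<theta>\<in>A. \<rho> \<theta> * f \<theta>) + e * (\<Sum>\<theta>\<in>A \<inter> \<Gamma>. \<rho> \<theta>)"
    for A and \<rho> :: "'a \<Rightarrow> real"
    by (simp add: f'_def distrib_left sum.distrib sum_mult_indicator)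
  have "g * g < g"
    using prob_\<Gamma>_pos prob_\<Gamma>_less_1 by (simp add: g_def mult_less_cancel_left1)
  then have "e * (g * g) < e * g"
    using \<open>0 < e\<close> by simp
  then have "g * (\<Sum>\<theta>\<in>UNIV. \<pi> \<theta> * f' \<theta>) < (\<Sum>\<theta>\<in>\<Gamma>. \<pi> \<theta> * f' \<theta>)"
    using no_bad_news by (simp add: f'_sum g_def[symmetric] algebra_simps)
  then have "(\<Sum>\<theta>\<in>UNIV. \<pi> \<theta> * f' \<theta>) \<le> (\<Sum>\<theta>\<in>UNIV. \<pi>t \<theta> * f' \<theta>)"
    unfolding g_def by (rule optimistic_expectation_mono_strict)
  moreover have "0 \<le> e * g" and "e * (\<Sum>\<theta>\<in>\<Gamma>. \<pi>t \<theta>) \<le> e"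
    using \<open>0 < e\<close> prob_\<Gamma>_pos prob_dist_sum_le_1[OF \<pi>t_dist] by (simp_all add: g_def)
  ultimately show "(\<Sum>\<theta>\<in>UNIV. \<pi> \<theta> * f \<theta>) \<le> (\<Sum>\<theta>\<in>UNIV. \<pi>t \<theta> * f \<theta>) + e"
    by (simp add: f'_sum g_def)
qed

lemma optimistic_expectation_eq:
  assumes no_news: "(\<Sum>\<theta>\<in>\<Gamma>. \<pi> \<theta>) * (\<Sum>\<theta>\<in>UNIV. \<pi> \<theta> * f \<theta>) = (\<Sum>\<theta>\<in>\<Gamma>. \<pi> \<theta> * f \<theta>)"
  shows "(\<Sum>\<theta>\<in>UNIV. \<pi>t \<theta> * f \<theta>) = (\<Sum>\<theta>\<in>UNIV. \<pi> \<theta> * f \<theta>)"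
proof -
  have "(\<Sum>\<theta>\<in>UNIV. \<pi> \<theta> * f \<theta>) \<le> (\<Sum>\<theta>\<in>UNIV. \<pi>t \<theta> * f \<theta>)"
    using no_news by (intro optimistic_expectation_mono) simp
  moreover have "(\<Sum>\<theta>\<in>UNIV. \<pi> \<theta> * - f \<theta>) \<le> (\<Sum>\<theta>\<in>UNIV. \<pi>t \<theta> * - f \<theta>)"
    using no_news by (intro optimistic_expectation_mono) (simp add: sum_negf)
  ultimately show ?thesis
    by (simp add: sum_negf)
qed

lemma optimistic_prob_\<Gamma>_mono: "(\<Sum>\<theta>\<in>\<Gamma>. \<pi> \<theta>) \<le> (\<Sum>\<theta>\<in>\<Gamma>. \<pi>t \<theta>)"
proof -
  have "(\<Sum>\<theta>\<in>UNIV. \<pi> \<theta> * (if \<theta> \<in> \<Gamma> then 1 else 0)) \<le> (\<Sum>\<theta>\<in>UNIV. \<pi>t \<theta> * (if \<theta> \<in> \<Gamma> then 1 else 0))"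
    using prob_\<Gamma>_pos prob_\<Gamma>_less_1
    by (intro optimistic_expectation_mono) (simp add: sum_mult_indicator)
  then show ?thesis
    by (simp add: sum_mult_indicator)
qed

lemma optimistic_ratio_inside:
  assumes "\<theta> \<in> \<Gamma>"
  shows "(\<Sum>x\<in>\<Gamma>. \<pi> x) * \<pi>t \<theta> = (\<Sum>x\<in>\<Gamma>. \<pi>t x) * \<pi> \<theta>"
proof -
  define g where "g = (\<Sum>x\<in>\<Gamma>. \<pi> x)"
  define f where "f = (\<lambda>x. (if x \<in> {\<theta>} then g else 0) - (if x \<in> \<Gamma> then \<pi> \<theta> else 0))"
  have f_sum: "(\<Sum>x\<in>A. \<rho> x * f x) = g * (\<Sum>x\<in>A \<inter> {\<theta>}. \<rho> x) - \<pi> \<theta> * (\<Sum>x\<in>A \<inter> \<Gamma>. \<rho> x)"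
    for A and \<rho> :: "'a \<Rightarrow> real"
    by (simp add: f_def right_diff_distrib sum_subtractf sum_mult_indicator del: insert_iff)
  have "(\<Sum>x\<in>UNIV. \<pi>t x * f x) = (\<Sum>x\<in>UNIV. \<pi> x * f x)"
    by (rule optimistic_expectation_eq) (use assms in \<open>simp add: f_sum g_def\<close>)
  then show ?thesis
    using assms by (simp add: f_sum g_def Int_absorb1)
qed

lemma optimistic_ratio_outside:
  assumes "\<theta> \<notin> \<Gamma>"
  shows "(1 - (\<Sum>x\<in>\<Gamma>. \<pi> x)) * \<pi>t \<theta> = (1 - (\<Sum>x\<in>\<Gamma>. \<pi>t x)) * \<pi> \<theta>"
proof -
  define g where "g = (\<Sum>x\<in>\<Gamma>. \<pi> x)"
  define f where "f = (\<lambda>x. (if x \<in> {\<theta>} then 1 - g else 0) + (if x \<in> \<Gamma> then \<pi> \<theta> else 0))"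
  have f_sum: "(\<Sum>x\<in>A. \<rho> x * f x) = (1 - g) * (\<Sum>x\<in>A \<inter> {\<theta>}. \<rho> x) + \<pi> \<theta> * (\<Sum>x\<in>A \<inter> \<Gamma>. \<rho> x)"
    for A and \<rho> :: "'a \<Rightarrow> real"
    by (simp add: f_def distrib_left sum.distrib sum_mult_indicator del: insert_iff)
  have "(\<Sum>x\<in>UNIV. \<pi>t x * f x) = (\<Sum>x\<in>UNIV. \<pi> x * f x)"
    by (rule optimistic_expectation_eq) (use assms in \<open>simp add: f_sum g_def algebra_simps\<close>)
  then show ?thesis
    using assms by (simp add: f_sum g_def algebra_simps)
qed

lemma optimistic_imp_two_level:
  obtains c0 c1 where "0 \<le> c0" and "c0 \<le> c1"
    and "\<And>\<theta>. \<pi>t \<theta> = (if \<theta> \<in> \<Gamma> then c1 else c0) * \<pi> \<theta>"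
proof -
  define g where "g = (\<Sum>\<theta>\<in>\<Gamma>. \<pi> \<theta>)"
  define Gt where "Gt = (\<Sum>\<theta>\<in>\<Gamma>. \<pi>t \<theta>)"
  have "0 < g" and "g < 1" and "g \<le> Gt" and "Gt \<le> 1"
    using prob_\<Gamma>_pos prob_\<Gamma>_less_1 optimistic_prob_\<Gamma>_mono prob_dist_sum_le_1[OF \<pi>t_dist]
    by (simp_all add: g_def Gt_def)
  have "\<pi>t \<theta> = (if \<theta> \<in> \<Gamma> then Gt / g else (1 - Gt) / (1 - g)) * \<pi> \<theta>" for \<theta>
    using optimistic_ratio_inside[of \<theta>] optimistic_ratio_outside[of \<theta>] \<open>0 < g\<close> \<open>g < 1\<close>
    by (simp add: g_def Gt_def field_simps)
  moreover have "0 \<le> (1 - Gt) / (1 - g)" and "(1 - Gt) / (1 - g) \<le> Gt / g"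
    using \<open>0 < g\<close> \<open>g < 1\<close> \<open>g \<le> Gt\<close> \<open>Gt \<le> 1\<close> by (simp_all add: field_simps)
  ultimately show ?thesis
    using that by blast
qed

end

end

theorem proposition3:
  fixes \<pi> \<pi>t :: "'a::finite \<Rightarrow> real" and \<Gamma> :: "'a set"
  assumes "prob_dist \<pi>" and "prob_dist \<pi>t"
    and "\<Gamma> \<subset> UNIV"
    and "0 < (\<Sum>\<theta>\<in>\<Gamma>. \<pi> \<theta>)" and "(\<Sum>\<theta>\<in>\<Gamma>. \<pi> \<theta>) < 1"
  shows "optimistic \<pi> \<pi>t \<Gamma> \<longleftrightarrow> strengthening \<pi> \<pi>t \<Gamma>"
proof
  assume "optimistic \<pi> \<pi>t \<Gamma>"
  then obtain c0 c1 where "0 \<le> c0" and "c0 \<le> c1"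
    and "\<And>\<theta>. \<pi>t \<theta> = (if \<theta> \<in> \<Gamma> then c1 else c0) * \<pi> \<theta>"
    using optimistic_imp_two_level assms(1,2,4,5) by blast
  then show "strengthening \<pi> \<pi>t \<Gamma>"
    using two_level_imp_strengthening assms(1,2,4) by blast
next
  assume "strengthening \<pi> \<pi>t \<Gamma>"
  then obtain c0 c1 where "c0 \<le> c1" and "\<And>\<theta>. \<pi>t \<theta> = (if \<theta> \<in> \<Gamma> then c1 else c0) * \<pi> \<theta>"
    using strengthening_imp_two_level assms(4) by blast
  then show "optimistic \<pi> \<pi>t \<Gamma>"
    using two_level_imp_optimistic assms(1) by blast
qed

end
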